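(* Let $R\ge2$, $0\le m<2^{R-1}$, and let $\mu$ be a partition of $m$ with $f^\mu$ odd. Then $2^R\notin H(\mu)^{+r}$ for every $1\le r\le 2^{R-1}$, and \[ S_{P_2^{\uparrow}(\mu)}(\mu)=2(-1)^{|H(\mu)|}\,g(H(\mu)). \]
   Context: $f^\lambda$ is the number of standard Young tableaux of shape $\lambda$; $\mathrm{Od}(N)=\pm1$ according as the odd part of $N\ge1$ is $\equiv1$ or $\equiv3\pmod4$. For $\lambda=(\lambda_1\ge\dots\ge\lambda_k>0)$, $H(\lambda):=\{\lambda_i+k-i\}$, $H(\varnothing)=\varnothing$. $X^{+r}:=\{x+r:x\in X\}\cup\{0,\dots,r-1\}$. For $1\le r\le2^R$ with $2^R\notin H(\mu)^{+r}$, $\lambda_{[r]}$ is the partition with $H(\lambda_{[r]})=(H(\mu)^{+r}\cup\{2^R\})\setminus\{0\}$. $P_2^{\uparrow}(\mu):=\{\lambda_{[r]}:1\le r\le2^{R-1}\}$. For a finite set $L$ of partitions, $S_L(\mu):=\frac{1}{\mathrm{Od}(f^\mu)}\sum_{\lambda\in L}\mathrm{Od}(f^\lambda)$. For finite $X\subset\mathbb{Z}_{\ge0}$, the parity gap $g(X)$ is the number of even elements of $X$ minus the number of odd elements of $X$. *)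

theory Defs
  imports Complex_Main "HOL-Library.FuncSet" "HOL-Computational_Algebra.Primes"
begin

definition is_partition :: "nat list \<Rightarrow> bool" where
  "is_partition lam \<longleftrightarrow> sorted_wrt (\<ge>) lam \<and> (\<forall>x\<in>set lam. 0 < x)"

definition cells :: "nat list \<Rightarrow> (nat \<times> nat) set" where
  "cells lam = {(i, j). i < length lam \<and> j < lam ! i}"

definition SYT :: "nat list \<Rightarrow> ((nat \<times> nat) \<Rightarrow> nat) set" where
  "SYT lam = {T. T \<in> cells lam \<rightarrow>\<^sub>E {1..sum_list lam}
      \<and> bij_betw T (cells lam) {1..sum_list lam}
      \<and> (\<forall>i j. (i, Suc j) \<in> cells lam \<longrightarrow> T (i, j) < T (i, Suc j))
      \<and> (\<forall>i j. (Suc i, j) \<in> cells lam \<longrightarrow> T (i, j) < T (Suc i, j))}"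

definition num_syt :: "nat list \<Rightarrow> nat" where
  "num_syt lam = card (SYT lam)"

text \<open>Od(N): +1 or -1 according as the odd part of N is 1 or 3 mod 4 (meant for N \<ge> 1).\<close>
definition odd_part :: "nat \<Rightarrow> nat" where
  "odd_part N = N div 2 ^ multiplicity (2::nat) N"

definition Od :: "nat \<Rightarrow> int" where
  "Od N = (if odd_part N mod 4 = 1 then 1 else -1)"

text \<open>H(lam) = {lam_i + k - i : 1 \<le> i \<le> k} (0-indexed below).\<close>
definition H :: "nat list \<Rightarrow> nat set" where
  "H lam = {lam ! i + length lam - 1 - i | i. i < length lam}"

definition shift :: "nat set \<Rightarrow> nat \<Rightarrow> nat set" where
  "shift X r = (\<lambda>x. x + r) ` X \<union> {0..<r}"

definition lam_r :: "nat \<Rightarrow> nat list \<Rightarrow> nat \<Rightarrow> nat list" where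
  "lam_r R mu r = (THE lam. is_partition lam \<and> H lam = (shift (H mu) r \<union> {2 ^ R}) - {0})"

definition P2up :: "nat \<Rightarrow> nat list \<Rightarrow> nat list set" where
  "P2up R mu = {lam_r R mu r | r. 1 \<le> r \<and> r \<le> 2 ^ (R - 1)}"

definition S_L :: "nat list set \<Rightarrow> nat list \<Rightarrow> real" where
  "S_L L mu = (1 / real_of_int (Od (num_syt mu))) * (\<Sum>lam\<in>L. real_of_int (Od (num_syt lam)))"

definition parity_gap :: "nat set \<Rightarrow> int" where
  "parity_gap X = int (card {x\<in>X. even x}) - int (card {x\<in>X. odd x})"

end

theory Submission
  imports Defs
begin

text \<open>Frobenius' form of the hook length formula, f = n! \<Prod>_{x>y} (x - y) / \<Prod>_x x! over a
  \<beta>-set of the shape, follows by induction on n from the branching rule (f is the sum of the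
  f's of the shapes with one corner removed): lowering a removable bead x by one multiplies the
  formula by x/n \<Prod>_{y \<noteq> x} (x - 1 - y)/(x - y), and these weights sum to n by a
  divided-difference identity.

  The \<beta>-set of \<lambda>_[r] arises from the \<beta>-set H(\<mu>)^{+r} of \<mu> by moving the bead 0 to 2^R, so
  f(\<lambda>_[r]) m! (2^R)! \<Prod> x = f(\<mu>) (m + 2^R)! \<Prod> (2^R - x), the products over the nonzero beads
  x < 2^R. As m < 2^(R-1), Od((m + 2^R)!) = Od((2^R)!) Od(m!), and Od(2^R - x) = -Od(x) unless
  x = 2^(R-1). Hence Od(f(\<lambda>_[r])) = Od(f(\<mu>)) (-1)^(|H(\<mu>)| + r - 1), negated when
  2^(R-1) - r \<in> H(\<mu>); summed over r the alternating signs cancel and each bead s of H(\<mu>)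
  contributes 2 (-1)^|H(\<mu>)| (-1)^s.\<close>

section \<open>Odd parts modulo 4\<close>

lemma odd_part_pow2_mult:
  assumes "odd (q::nat)"
  shows "odd_part (2 ^ v * q) = q"
proof -
  have "multiplicity (2::nat) (2 ^ v * q) = v"
    by (rule multiplicity_decomposeI[of _ _ _ q]) (use assms in auto)
  then show ?thesis
    unfolding odd_part_def using assms by simp
qed

lemma pow2_odd_decomp:
  assumes "(n::nat) > 0"
  obtains v q where "n = 2 ^ v * q" "odd q"
proof -
  obtain q where "n = 2 ^ multiplicity 2 n * q" "\<not> 2 dvd q"
    using multiplicity_decompose'[of n "2::nat"] assms by auto
  then show ?thesis using that by auto
qed

lemma Od_pow2_mult: "odd (q::nat) \<Longrightarrow> Od (2 ^ v * q) = (if q mod 4 = 1 then 1 else -1)"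
  by (simp add: Od_def odd_part_pow2_mult)

lemma odd_mod_4_cases: "odd (q::nat) \<Longrightarrow> q mod 4 = 1 \<or> q mod 4 = 3"
  by presburger

lemma Od_cases: "Od a = 1 \<or> Od a = -1"
  by (simp add: Od_def)

lemma Od_mult:
  assumes "(a::nat) > 0" "b > 0"
  shows "Od (a * b) = Od a * Od b"
proof -
  obtain va qa where a: "a = 2 ^ va * qa" "odd qa" using pow2_odd_decomp assms(1) by blast
  obtain vb qb where b: "b = 2 ^ vb * qb" "odd qb" using pow2_odd_decomp assms(2) by blast
  have ab: "a * b = 2 ^ (va + vb) * (qa * qb)" using a b by (simp add: power_add algebra_simps)
  have "(qa * qb) mod 4 = ((qa mod 4) * (qb mod 4)) mod 4" by (simp add: mod_mult_eq)
  then show ?thesis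
    using odd_mod_4_cases[OF a(2)] odd_mod_4_cases[OF b(2)] a b
    unfolding ab by (auto simp: Od_pow2_mult)
qed

lemma Od_prod:
  assumes "finite A" "\<forall>x\<in>A. f x > (0::nat)"
  shows "Od (\<Prod>x\<in>A. f x) = (\<Prod>x\<in>A. Od (f x))"
  using assms
proof (induction A rule: finite_induct)
  case empty
  then show ?case by (simp add: Od_def odd_part_def)
next
  case (insert a A)
  then show ?case by (simp add: Od_mult prod_pos)
qed

lemma Od_pow2_add:
  assumes "0 < i" "i < 2 ^ (R - 1)"
  shows "Od (2 ^ R + i) = Od i"
proof -
  obtain v q where i: "i = 2 ^ v * q" "odd q" using pow2_odd_decomp assms(1) by blast
  have "(2::nat) ^ v \<le> i" using i by (cases q) auto
  then have "(2::nat) ^ v < 2 ^ (R - 1)" using assms(2) by linarith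
  then have "v < R - 1" by simp
  then obtain d where d: "R = v + 2 + d" by (intro that[of "R - v - 2"]) simp
  have "2 ^ R + i = 2 ^ v * (4 * 2 ^ d + q)" using i d by (simp add: power_add algebra_simps)
  then show ?thesis using i by (simp add: Od_pow2_mult)
qed

lemma Od_pow2_diff:
  assumes "0 < x" "x < 2 ^ R" "x \<noteq> 2 ^ (R - 1)"
  shows "Od (2 ^ R - x) = - Od x"
proof -
  obtain v q where x: "x = 2 ^ v * q" "odd q" using pow2_odd_decomp assms(1) by blast
  have "(2::nat) ^ v \<le> x" using x by (cases q) auto
  then have "(2::nat) ^ v < 2 ^ R" using assms(2) by linarith
  then have "v < R" by simp
  have "v \<noteq> R - 1"
  proof
    assume v: "v = R - 1"
    then have "(2::nat) ^ R = 2 * 2 ^ v" using \<open>v < R\<close> by (simp flip: power_Suc)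
    then have "q < 2" using assms(2) x by simp
    then show False using assms(3) x v by (simp add: odd_pos less_2_cases_iff)
  qed
  then obtain d where d: "R = v + 2 + d" using \<open>v < R\<close> by (intro that[of "R - v - 2"]) simp
  have q_less: "q < 4 * 2 ^ d" using assms(2) x d by (simp add: power_add)
  have diff: "2 ^ R - x = 2 ^ v * (4 * 2 ^ d - q)"
    using x d by (simp add: power_add algebra_simps diff_mult_distrib2)
  have complement_mod_4: "(q mod 4 = 1 \<longrightarrow> a mod 4 = 3) \<and> (q mod 4 = 3 \<longrightarrow> a mod 4 = 1)"
    if "(a + q) mod 4 = 0" for a :: nat
    using that by presburger
  have "((4 * 2 ^ d - q) + q) mod 4 = 0" using q_less by simp
  note complement_mod_4[OF this]
  moreover have "odd (4 * 2 ^ d - q)" using x(2) q_less by simp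
  ultimately show ?thesis
    using diff x odd_mod_4_cases[OF x(2)] by (auto simp: Od_pow2_mult)
qed

lemma Od_fact_pow2_add:
  assumes "m < 2 ^ (R - 1)"
  shows "Od (fact (2 ^ R + m)) = Od (fact (2 ^ R)) * Od (fact m)"
  using assms
proof (induction m)
  case 0
  then show ?case by (simp add: Od_def odd_part_def)
next
  case (Suc m)
  have "Od (fact (2 ^ R + Suc m)) = Od (2 ^ R + Suc m) * Od (fact (2 ^ R + m))"
    unfolding add_Suc_right fact_Suc of_nat_id by (rule Od_mult) simp_all
  also have "\<dots> = Od (Suc m) * (Od (fact (2 ^ R)) * Od (fact m))"
    using Suc Od_pow2_add[of "Suc m" R] by simp
  moreover have "Od (fact (Suc m)) = Od (Suc m) * Od (fact m)"
    unfolding fact_Suc of_nat_id by (rule Od_mult) simp_all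
  ultimately show ?case by (simp add: mult_ac)
qed

lemma prod_sign_one_at:
  assumes "finite A"
  shows "(\<Prod>x\<in>A. if x = c then 1 else -1 :: int) = (-1) ^ card A * (if c \<in> A then -1 else 1)"
  using assms by (induction A rule: finite_induct) auto

lemma Od_from_fact_pow2_identity:
  assumes "R > 0" "m < 2 ^ (R - 1)" "finite A" "\<forall>x\<in>A. 0 < x \<and> x < 2 ^ R" "b > 0"
    and identity: "a * fact m * fact (2 ^ R) * (\<Prod>x\<in>A. x) = b * fact (m + 2 ^ R) * (\<Prod>x\<in>A. 2 ^ R - x)"
  shows "Od a = Od b * (-1) ^ card A * (if 2 ^ (R - 1) \<in> A then -1 else 1)"
proof -
  let ?M = "2 ^ (R - 1) :: nat"
  let ?P = "\<Prod>x\<in>A. x" and ?Q = "\<Prod>x\<in>A. 2 ^ R - x"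
  have "(2::nat) ^ R = 2 * ?M" using assms(1) by (simp flip: power_Suc)
  then have "Od (2 ^ R - x) = (if x = ?M then 1 else -1) * Od x" if "x \<in> A" for x
    using that assms(4) Od_pow2_diff[of x R] by auto
  then have Od_Q: "Od ?Q = (\<Prod>x\<in>A. if x = ?M then 1 else -1) * Od ?P"
    using assms(3,4) by (simp add: Od_prod prod.distrib[symmetric])
  have "?P > 0" "?Q > 0" using assms(4) by (auto simp: prod_pos)
  moreover have "a > 0"
  proof (rule ccontr)
    assume "\<not> a > 0"
    then show False using identity \<open>?Q > 0\<close> assms(5) by simp
  qed
  moreover have "Od (fact m) \<noteq> 0" "Od (fact (2 ^ R)) \<noteq> 0" "Od ?P \<noteq> 0"
    using Od_cases by (metis zero_neq_neg_one zero_neq_one)+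
  ultimately have "Od a = Od b * (\<Prod>x\<in>A. if x = ?M then 1 else -1)"
    using arg_cong[OF identity, of Od] assms(5) Od_fact_pow2_add[OF assms(2)] Od_Q
    by (simp add: Od_mult add.commute)
  then show ?thesis using prod_sign_one_at[OF assms(3)] by simp
qed

section \<open>Divided differences\<close>

definition divdiff :: "(real \<Rightarrow> real) \<Rightarrow> real set \<Rightarrow> real" where
  "divdiff f X = (\<Sum>x\<in>X. f x / (\<Prod>y\<in>X - {x}. x - y))"

lemma divdiff_cmult: "divdiff (\<lambda>t. c * f t) X = c * divdiff f X"
  unfolding divdiff_def by (simp add: sum_distrib_left)

lemma divdiff_sum: "divdiff (\<lambda>t. \<Sum>S\<in>A. g S t) X = (\<Sum>S\<in>A. divdiff (g S) X)"
  unfolding divdiff_def by (simp add: sum_divide_distrib[symmetric] sum.swap[of _ X])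

lemma divdiff_linear_factor:
  assumes "finite X" "a \<in> X"
  shows "divdiff (\<lambda>t. (t - a) * f t) X = divdiff f (X - {a})"
proof -
  have "divdiff (\<lambda>t. (t - a) * f t) X = (\<Sum>x\<in>X - {a}. (x - a) * f x / (\<Prod>y\<in>X - {x}. x - y))"
    unfolding divdiff_def
    using sum.remove[OF assms, of "\<lambda>x. (x - a) * f x / (\<Prod>y\<in>X - {x}. x - y)"] by simp
  also have "\<dots> = (\<Sum>x\<in>X - {a}. f x / (\<Prod>y\<in>X - {a} - {x}. x - y))"
  proof (rule sum.cong[OF refl])
    fix x assume x: "x \<in> X - {a}"
    then have "X - {x} = insert a (X - {a} - {x})" using assms by auto
    then have "(\<Prod>y\<in>X - {x}. x - y) = (x - a) * (\<Prod>y\<in>X - {a} - {x}. x - y)"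
      using assms(1) by simp
    then show "(x - a) * f x / (\<Prod>y\<in>X - {x}. x - y) = f x / (\<Prod>y\<in>X - {a} - {x}. x - y)"
      using x by simp
  qed
  finally show ?thesis unfolding divdiff_def .
qed

lemma divdiff_prod_linear_factors:
  assumes "finite S" "finite X" "S \<subseteq> X"
  shows "divdiff (\<lambda>t. (\<Prod>y\<in>S. t - y) * f t) X = divdiff f (X - S)"
  using assms
proof (induction S arbitrary: X rule: finite_induct)
  case empty
  then show ?case by simp
next
  case (insert b S X)
  have "divdiff (\<lambda>t. (\<Prod>y\<in>insert b S. t - y) * f t) X
      = divdiff (\<lambda>t. (t - b) * ((\<Prod>y\<in>S. t - y) * f t)) X"
    using insert by (simp add: mult.assoc)
  also have "\<dots> = divdiff (\<lambda>t. (\<Prod>y\<in>S. t - y) * f t) (X - {b})"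
    using insert by (intro divdiff_linear_factor) auto
  also have "\<dots> = divdiff f (X - {b} - S)"
    using insert by (intro insert.IH) auto
  also have "X - {b} - S = X - insert b S"
    by auto
  finally show ?case .
qed

lemma divdiff_times_id:
  assumes "finite X" "a \<in> X"
  shows "divdiff (\<lambda>t. t * f t) X = divdiff f (X - {a}) + a * divdiff f X"
proof -
  have "divdiff (\<lambda>t. t * f t) X = divdiff (\<lambda>t. (t - a) * f t) X + divdiff (\<lambda>t. a * f t) X"
    unfolding divdiff_def by (simp add: sum.distrib[symmetric] add_divide_distrib[symmetric] algebra_simps)
  then show ?thesis using divdiff_linear_factor[OF assms] divdiff_cmult by simp
qed

lemma divdiff_power:
  assumes "finite X" "j < card X"
  shows "divdiff (\<lambda>t. t ^ j) X = (if Suc j = card X then 1 else 0)"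
  using assms
proof (induction "card X" arbitrary: X j rule: less_induct)
  case less
  show ?case
  proof (cases "card X = 1")
    case True
    then obtain a where "X = {a}" by (rule card_1_singletonE)
    then show ?thesis using less.prems by (simp add: divdiff_def)
  next
    case False
    obtain a where a: "a \<in> X" using less.prems by fastforce
    have "card (X - {a}) \<noteq> 0" using False less.prems a by simp
    then obtain b where b: "b \<in> X - {a}" by (metis card.empty ex_in_conv)
    then have ab: "a \<in> X" "b \<in> X" "a \<noteq> b" using a by auto
    have card_minus: "card (X - {x}) = card X - 1" if "x \<in> X" for x
      using that less.prems(1) by simp
    have power_IH: "divdiff (\<lambda>t. t ^ i) (X - {x}) = (if Suc (Suc i) = card X then 1 else 0)"
      if "x \<in> X" "Suc (Suc i) \<le> card X" for x i
      using less.hyps[of "X - {x}" i] that less.prems(1) card_minus[OF that(1)] by auto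
    have zero: "divdiff (\<lambda>t. t ^ i) X = 0" if "Suc (Suc i) \<le> card X" for i
    proof -
      have "divdiff (\<lambda>t. t ^ i) (X - {a}) + a * divdiff (\<lambda>t. t ^ i) X
          = divdiff (\<lambda>t. t ^ i) (X - {b}) + b * divdiff (\<lambda>t. t ^ i) X"
        using divdiff_times_id[OF less.prems(1) ab(1), of "\<lambda>t. t ^ i", symmetric]
          divdiff_times_id[OF less.prems(1) ab(2), of "\<lambda>t. t ^ i"]
        by (rule trans)
      then have "(a - b) * divdiff (\<lambda>t. t ^ i) X = 0"
        using power_IH[OF ab(1) that] power_IH[OF ab(2) that] by (simp add: algebra_simps)
      then show ?thesis using ab(3) by simp
    qed
    show ?thesis
    proof (cases "Suc j = card X")
      case True
      then obtain i where i: "j = Suc i" using False by (cases j) auto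
      have "divdiff (\<lambda>t. t ^ j) X = divdiff (\<lambda>t. t ^ i) (X - {a}) + a * divdiff (\<lambda>t. t ^ i) X"
        unfolding i power_Suc by (rule divdiff_times_id[OF less.prems(1) ab(1)])
      then show ?thesis using power_IH[OF ab(1), of i] zero[of i] True i by simp
    next
      case False
      then show ?thesis using zero[of j] less.prems(2) by simp
    qed
  qed
qed

lemma divdiff_id:
  assumes "finite Z"
  shows "divdiff (\<lambda>t. t) Z = (if card Z = 1 then \<Sum>Z else if card Z = 2 then 1 else 0)"
proof -
  consider "card Z = 0" | "card Z = 1" | "card Z \<ge> 2" by linarith
  then show ?thesis
  proof cases
    case 1
    then show ?thesis using assms by (simp add: divdiff_def)
  next
    case 2
    then obtain z where "Z = {z}" by (rule card_1_singletonE)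
    then show ?thesis by (simp add: divdiff_def)
  next
    case 3
    then show ?thesis using divdiff_power[OF assms, of 1] by simp
  qed
qed

lemma sum_signed_divdiff_id:
  assumes "finite X"
  shows "(\<Sum>Z\<in>Pow X. (-1) ^ card Z * divdiff (\<lambda>t. t) Z) = real (card X choose 2) - \<Sum>X"
proof -
  have fin: "finite (Pow X)" using assms by simp
  have "(\<Sum>Z\<in>Pow X. (-1) ^ card Z * divdiff (\<lambda>t. t) Z)
      = (\<Sum>Z\<in>Pow X. (if card Z = 1 then - \<Sum>Z else 0) + (if card Z = 2 then 1 else 0))"
  proof (rule sum.cong[OF refl])
    fix Z assume "Z \<in> Pow X"
    then have "finite Z" using assms finite_subset by blast
    then show "(-1) ^ card Z * divdiff (\<lambda>t. t) Z
        = (if card Z = 1 then - \<Sum>Z else 0) + (if card Z = 2 then 1 else 0)"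
      by (simp add: divdiff_id)
  qed
  also have "\<dots> = (\<Sum>Z\<in>{Z\<in>Pow X. card Z = 1}. - \<Sum>Z) + (\<Sum>Z\<in>{Z\<in>Pow X. card Z = 2}. 1)"
    by (simp only: sum.distrib sum.inter_filter[OF fin])
  also have "{Z\<in>Pow X. card Z = 1} = (\<lambda>x. {x}) ` X"
    by (auto simp: card_1_singleton_iff)
  also have "(\<Sum>Z\<in>(\<lambda>x. {x}) ` X. - \<Sum>Z) = - \<Sum>X"
    by (subst sum.reindex) (auto simp: inj_on_def sum_negf)
  also have "{Z\<in>Pow X. card Z = 2} = {Z. Z \<subseteq> X \<and> card Z = 2}"
    by auto
  finally show ?thesis using n_subsets[OF assms, of 2] by simp
qed

text \<open>The left-hand side is minus the divided difference of \<open>t \<Prod>y\<in>X. (t - y - 1)\<close> over \<open>X\<close>;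
  expanding the product and cancelling the linear factors reduces it to divided differences of
  the identity.\<close>
lemma branching_weight_identity:
  assumes "finite X"
  shows "(\<Sum>x\<in>X. x * (\<Prod>y\<in>X - {x}. (x - 1 - y) / (x - y))) = \<Sum>X - real (card X choose 2)"
proof -
  have "(\<Sum>x\<in>X. x * (\<Prod>y\<in>X - {x}. (x - 1 - y) / (x - y)))
      = - divdiff (\<lambda>t. t * (\<Prod>y\<in>X. (t - y) + (-1))) X"
    unfolding divdiff_def
  proof (subst sum_negf[symmetric], rule sum.cong[OF refl])
    fix x assume x: "x \<in> X"
    have "(\<Prod>y\<in>X. (x - y) + (-1)) = - (\<Prod>y\<in>X - {x}. x - 1 - y)"
      using prod.remove[OF assms x, of "\<lambda>y. (x - y) + (-1)"] by (simp add: algebra_simps)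
    then show "x * (\<Prod>y\<in>X - {x}. (x - 1 - y) / (x - y))
        = - (x * (\<Prod>y\<in>X. (x - y) + (-1)) / (\<Prod>y\<in>X - {x}. x - y))"
      by (simp add: prod_dividef)
  qed
  also have "(\<lambda>t. t * (\<Prod>y\<in>X. (t - y) + (-1)))
      = (\<lambda>t. \<Sum>S\<in>Pow X. (-1) ^ card (X - S) * ((\<Prod>y\<in>S. t - y) * t))"
  proof
    fix t
    have "(\<Prod>y\<in>X. (t - y) + (-1)) = (\<Sum>S\<in>Pow X. (\<Prod>y\<in>S. t - y) * (\<Prod>y\<in>X - S. -1))"
      by (rule prod_add[OF assms])
    then show "t * (\<Prod>y\<in>X. (t - y) + (-1))
        = (\<Sum>S\<in>Pow X. (-1) ^ card (X - S) * ((\<Prod>y\<in>S. t - y) * t))"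
      by (simp add: sum_distrib_left mult_ac)
  qed
  also have "divdiff \<dots> X = (\<Sum>S\<in>Pow X. (-1) ^ card (X - S) * divdiff (\<lambda>t. t) (X - S))"
    unfolding divdiff_sum
    by (rule sum.cong) (use assms in \<open>auto simp: divdiff_cmult divdiff_prod_linear_factors
        intro: divdiff_prod_linear_factors[OF finite_subset] \<close>)
  also have "\<dots> = (\<Sum>Z\<in>Pow X. (-1) ^ card Z * divdiff (\<lambda>t. t) Z)"
    by (rule sum.reindex_bij_witness[of _ "\<lambda>Z. X - Z" "\<lambda>Z. X - Z"]) auto
  finally show ?thesis using sum_signed_divdiff_id[OF assms] by simp
qed

section \<open>Standard fillings and the branching rule\<close>

definition syt_of :: "(nat \<times> nat) set \<Rightarrow> ((nat \<times> nat) \<Rightarrow> nat) set" where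
  "syt_of D = {T. T \<in> D \<rightarrow>\<^sub>E {1..card D} \<and> bij_betw T D {1..card D}
      \<and> (\<forall>i j. (i, Suc j) \<in> D \<and> (i, j) \<in> D \<longrightarrow> T (i, j) < T (i, Suc j))
      \<and> (\<forall>i j. (Suc i, j) \<in> D \<and> (i, j) \<in> D \<longrightarrow> T (i, j) < T (Suc i, j))}"

definition corners :: "(nat \<times> nat) set \<Rightarrow> (nat \<times> nat) set" where
  "corners D = {c \<in> D. (fst c, Suc (snd c)) \<notin> D \<and> (Suc (fst c), snd c) \<notin> D}"

lemma finite_syt_of: "finite D \<Longrightarrow> finite (syt_of D)"
  by (rule finite_subset[of _ "D \<rightarrow>\<^sub>E {1..card D}"]) (auto simp: syt_of_def finite_PiE)

lemma card_syt_of_empty: "card (syt_of {}) = 1"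
proof -
  have "syt_of {} = {\<lambda>_. undefined}"
    by (auto simp: syt_of_def bij_betw_def)
  then show ?thesis by simp
qed

lemma syt_of_remove_max:
  assumes "finite D" "T \<in> syt_of D" "c \<in> D" "T c = card D"
  shows "T(c := undefined) \<in> syt_of (D - {c})"
proof -
  let ?n = "card D" and ?T' = "T(c := undefined)"
  have T: "T \<in> extensional D" "bij_betw T D {1..?n}"
    "\<forall>i j. (i, Suc j) \<in> D \<and> (i, j) \<in> D \<longrightarrow> T (i, j) < T (i, Suc j)"
    "\<forall>i j. (Suc i, j) \<in> D \<and> (i, j) \<in> D \<longrightarrow> T (i, j) < T (Suc i, j)"
    using assms(2) by (auto simp: syt_of_def PiE_def)
  have "bij_betw T (D - {c}) ({1..?n} - {?n})"
    by (rule bij_betw_DiffI[OF T(2)]) (use assms in \<open>auto simp: Suc_le_eq card_gt_0_iff\<close>)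
  moreover have "{1..?n} - {?n} = {1..card (D - {c})}" using assms(1,3) by auto
  ultimately have "bij_betw T (D - {c}) {1..card (D - {c})}"
    by simp
  moreover have "bij_betw ?T' (D - {c}) {1..card (D - {c})} = bij_betw T (D - {c}) {1..card (D - {c})}"
    by (rule bij_betw_cong) simp
  ultimately have bij: "bij_betw ?T' (D - {c}) {1..card (D - {c})}"
    by simp
  have "?T' \<in> extensional (D - {c})" using T(1) by (auto simp: extensional_def)
  then have "?T' \<in> (D - {c}) \<rightarrow>\<^sub>E {1..card (D - {c})}"
    using bij by (auto simp: PiE_iff bij_betw_def)
  then show ?thesis using bij T(3,4) by (simp add: syt_of_def)
qed

lemma syt_of_add_corner:
  assumes "finite D" "c \<in> corners D" "T \<in> syt_of (D - {c})"
  shows "T(c := card D) \<in> syt_of D"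
proof -
  let ?n = "card D" and ?T' = "T(c := card D)"
  have cD: "c \<in> D" using assms(2) by (simp add: corners_def)
  have card_minus: "card (D - {c}) = ?n - 1" using assms(1) cD by simp
  have n_pos: "?n \<ge> 1" using assms(1) cD by (auto simp: Suc_le_eq card_gt_0_iff)
  have T: "T \<in> extensional (D - {c})" "bij_betw T (D - {c}) {1..?n - 1}"
    "\<forall>i j. (i, Suc j) \<in> D - {c} \<and> (i, j) \<in> D - {c} \<longrightarrow> T (i, j) < T (i, Suc j)"
    "\<forall>i j. (Suc i, j) \<in> D - {c} \<and> (i, j) \<in> D - {c} \<longrightarrow> T (i, j) < T (Suc i, j)"
    using assms(3) by (auto simp: syt_of_def card_minus PiE_def)
  have less_n: "T x < ?n" if "x \<in> D - {c}" for x
  proof -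
    have "T x \<in> {1..?n - 1}" using bij_betwE[OF T(2)] that by blast
    then show ?thesis using n_pos by auto
  qed
  have "bij_betw ?T' (D - {c}) {1..?n - 1} = bij_betw T (D - {c}) {1..?n - 1}"
    by (rule bij_betw_cong) simp
  with T(2) have "bij_betw ?T' (D - {c}) {1..?n - 1}"
    by simp
  then have "bij_betw ?T' ((D - {c}) \<union> {c}) ({1..?n - 1} \<union> {?n})"
    by (rule bij_betw_combine) auto
  moreover have "(D - {c}) \<union> {c} = D" "{1..?n - 1} \<union> {?n} = {1..?n}" using cD n_pos by auto
  ultimately have bij: "bij_betw ?T' D {1..?n}" by simp
  have "?T' \<in> extensional D" using T(1) cD by (auto simp: extensional_def)
  then have "?T' \<in> D \<rightarrow>\<^sub>E {1..?n}"
    using bij by (auto simp: PiE_iff bij_betw_def)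
  moreover have "(i, j) \<noteq> c" if "(i, Suc j) \<in> D \<or> (Suc i, j) \<in> D" for i j
    using assms(2) that by (auto simp: corners_def)
  ultimately show ?thesis
    using bij T(3,4) less_n by (auto simp: syt_of_def)
qed

lemma card_syt_of_max_at_corner:
  assumes "finite D" "c \<in> corners D"
  shows "card {T \<in> syt_of D. T c = card D} = card (syt_of (D - {c}))"
proof -
  have cD: "c \<in> D" using assms(2) by (simp add: corners_def)
  have "bij_betw (\<lambda>T. T(c := undefined)) {T \<in> syt_of D. T c = card D} (syt_of (D - {c}))"
  proof (rule bij_betw_byWitness[where f' = "\<lambda>T. T(c := card D)"])
    show "\<forall>T\<in>{T \<in> syt_of D. T c = card D}. (T(c := undefined))(c := card D) = T"
      by auto
    show "\<forall>T\<in>syt_of (D - {c}). (T(c := card D))(c := undefined) = T"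
    proof
      fix T assume "T \<in> syt_of (D - {c})"
      then have "T \<in> (D - {c}) \<rightarrow>\<^sub>E {1..card (D - {c})}" by (simp add: syt_of_def)
      then have "T c = undefined" by (rule PiE_arb) simp
      then show "(T(c := card D))(c := undefined) = T" by auto
    qed
    show "(\<lambda>T. T(c := undefined)) ` {T \<in> syt_of D. T c = card D} \<subseteq> syt_of (D - {c})"
      using syt_of_remove_max[OF assms(1) _ cD] by blast
    show "(\<lambda>T. T(c := card D)) ` syt_of (D - {c}) \<subseteq> {T \<in> syt_of D. T c = card D}"
      using syt_of_add_corner[OF assms] by auto
  qed
  then show ?thesis by (rule bij_betw_same_card)
qed

lemma card_syt_of_branching:
  assumes "finite D" "D \<noteq> {}"
  shows "card (syt_of D) = (\<Sum>c\<in>corners D. card (syt_of (D - {c})))"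
proof -
  let ?n = "card D"
  have "?n \<ge> 1" using assms by (auto simp: Suc_le_eq card_gt_0_iff)
  have max_at_corner: "\<exists>c\<in>corners D. T c = ?n" if T: "T \<in> syt_of D" for T
  proof -
    have T_bij: "bij_betw T D {1..?n}"
      and T_less: "\<forall>x\<in>D. T x \<le> ?n"
      and T_row: "\<forall>i j. (i, Suc j) \<in> D \<and> (i, j) \<in> D \<longrightarrow> T (i, j) < T (i, Suc j)"
      and T_col: "\<forall>i j. (Suc i, j) \<in> D \<and> (i, j) \<in> D \<longrightarrow> T (i, j) < T (Suc i, j)"
      using T by (auto simp: syt_of_def)
    obtain c where c: "c \<in> D" "T c = ?n"
      using \<open>?n \<ge> 1\<close> bij_betw_imp_surj_on[OF T_bij] by (metis atLeastAtMost_iff imageE order_refl)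
    then have "c \<in> corners D"
      using T_less T_row T_col by (cases c) (fastforce simp: corners_def)
    with c show ?thesis by blast
  qed
  have union: "syt_of D = (\<Union>c\<in>corners D. {T \<in> syt_of D. T c = ?n})"
    using max_at_corner by auto
  have "card (\<Union>c\<in>corners D. {T \<in> syt_of D. T c = ?n}) = (\<Sum>c\<in>corners D. card {T \<in> syt_of D. T c = ?n})"
  proof (rule card_UN_disjoint)
    show "finite (corners D)" using assms(1) by (simp add: corners_def)
    show "\<forall>c\<in>corners D. finite {T \<in> syt_of D. T c = ?n}" using finite_syt_of[OF assms(1)] by simp
    show "\<forall>a\<in>corners D. \<forall>b\<in>corners D. a \<noteq> b \<longrightarrow>
        {T \<in> syt_of D. T a = ?n} \<inter> {T \<in> syt_of D. T b = ?n} = {}"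
    proof (intro ballI impI equals0I)
      fix a b T assume ab: "a \<in> corners D" "b \<in> corners D" "a \<noteq> b"
        and "T \<in> {T \<in> syt_of D. T a = ?n} \<inter> {T \<in> syt_of D. T b = ?n}"
      then have "inj_on T D" "T a = T b" by (auto simp: syt_of_def bij_betw_def)
      then show False using ab by (auto simp: corners_def inj_on_def)
    qed
  qed
  then have "card (syt_of D) = (\<Sum>c\<in>corners D. card {T \<in> syt_of D. T c = ?n})"
    by (simp only: union[symmetric])
  also have "\<dots> = (\<Sum>c\<in>corners D. card (syt_of (D - {c})))"
    using card_syt_of_max_at_corner[OF assms(1)] by simp
  finally show ?thesis .
qed
lemma syt_of_down_closed:
  "(\<And>i j. (i, Suc j) \<in> D \<Longrightarrow> (i, j) \<in> D) \<Longrightarrow> (\<And>i j. (Suc i, j) \<in> D \<Longrightarrow> (i, j) \<in> D) \<Longrightarrow>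
   syt_of D = {T. T \<in> D \<rightarrow>\<^sub>E {1..card D} \<and> bij_betw T D {1..card D}
      \<and> (\<forall>i j. (i, Suc j) \<in> D \<longrightarrow> T (i, j) < T (i, Suc j))
      \<and> (\<forall>i j. (Suc i, j) \<in> D \<longrightarrow> T (i, j) < T (Suc i, j))}"
  unfolding syt_of_def by blast

section \<open>Beta-sets and their diagrams\<close>

text \<open>A finite set \<open>X\<close> of naturals is read as a \<open>\<beta>\<close>-set (abacus of beads): the bead
  \<open>x \<in> X\<close> gives the row with index \<open>beads_above X x\<close> and length \<open>x - beads_below X x\<close>.
  For \<open>X = H \<lambda>\<close> this is the Young diagram of \<open>\<lambda>\<close>.\<close>
definition beads_above :: "nat set \<Rightarrow> nat \<Rightarrow> nat" where
  "beads_above X x = card {y\<in>X. x < y}"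

definition beads_below :: "nat set \<Rightarrow> nat \<Rightarrow> nat" where
  "beads_below X x = card {y\<in>X. y < x}"

definition diagram :: "nat set \<Rightarrow> (nat \<times> nat) set" where
  "diagram X = {(i, j). \<exists>x\<in>X. i = beads_above X x \<and> j + beads_below X x < x}"

lemma beads_above_below_card:
  assumes "finite X" "x \<in> X"
  shows "beads_above X x + beads_below X x + 1 = card X"
proof -
  have "X = insert x ({y\<in>X. x < y} \<union> {y\<in>X. y < x})" using assms by auto
  then have "card X = Suc (card ({y\<in>X. x < y} \<union> {y\<in>X. y < x}))"
    using assms by (metis (no_types, lifting) card_insert_disjoint finite_Un finite_subset
        mem_Collect_eq less_irrefl Un_iff subsetI)
  also have "card ({y\<in>X. x < y} \<union> {y\<in>X. y < x}) = card {y\<in>X. x < y} + card {y\<in>X. y < x}"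
    using assms by (intro card_Un_disjoint) auto
  finally show ?thesis by (simp add: beads_above_def beads_below_def)
qed

lemma beads_below_le: "beads_below X x \<le> x"
proof -
  have "{y\<in>X. y < x} \<subseteq> {..<x}" by auto
  then show ?thesis unfolding beads_below_def by (metis card_lessThan card_mono finite_lessThan)
qed

lemma beads_below_le_pred:
  assumes "x - 1 \<notin> X" "0 < x"
  shows "beads_below X x \<le> x - 1"
proof -
  have "{y\<in>X. y < x} \<subseteq> {..<x} - {x - 1}" using assms by auto
  moreover have "card ({..<x} - {x - 1}) = x - 1" using assms by simp
  ultimately show ?thesis unfolding beads_below_def by (metis card_mono finite_Diff finite_lessThan)
qed

lemma beads_below_strict_mono:
  assumes "finite X" "x \<in> X" "x < y"
  shows "beads_below X x < beads_below X y"
proof -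
  have "{z\<in>X. z < x} \<subset> {z\<in>X. z < y}" using assms by auto
  then show ?thesis unfolding beads_below_def using assms by (intro psubset_card_mono) auto
qed

lemma beads_above_strict_antimono:
  assumes "finite X" "y \<in> X" "x < y"
  shows "beads_above X y < beads_above X x"
proof -
  have "{z\<in>X. y < z} \<subset> {z\<in>X. x < z}" using assms by auto
  then show ?thesis unfolding beads_above_def using assms by (intro psubset_card_mono) auto
qed

lemma beads_above_inj:
  assumes "finite X" "x \<in> X" "y \<in> X" "beads_above X x = beads_above X y"
  shows "x = y"
  using beads_above_strict_antimono[OF assms(1,2), of y] beads_above_strict_antimono[OF assms(1,3), of x]
    assms(4) by (metis less_irrefl nat_neq_iff)

lemma beads_above_less_imp_greater:
  assumes "finite X" "x \<in> X" "y \<in> X" "beads_above X x < beads_above X y"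
  shows "y < x"
  using beads_above_strict_antimono[OF assms(1,2), of y] beads_above_strict_antimono[OF assms(1,3), of x]
    assms(4) by (metis less_asym nat_neq_iff)

lemma sum_lessThan_eq_choose_two: "(\<Sum>i<k. i) = k choose 2"
proof (induction k)
  case (Suc k)
  have "Suc k choose 2 = (k choose 1) + (k choose 2)"
    by (simp add: numeral_2_eq_2)
  then show ?case using Suc by simp
qed simp

lemma sum_beads_below:
  assumes "finite X"
  shows "(\<Sum>x\<in>X. beads_below X x) = card X choose 2"
proof -
  have inj: "inj_on (beads_below X) X"
    by (rule inj_onI) (metis assms beads_below_strict_mono less_irrefl nat_neq_iff)
  have "beads_below X ` X \<subseteq> {..<card X}"
    using beads_above_below_card[OF assms] by fastforce
  then have "beads_below X ` X = {..<card X}"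
    using card_image[OF inj] by (metis card_lessThan card_subset_eq finite_lessThan)
  then have "(\<Sum>x\<in>X. beads_below X x) = (\<Sum>i<card X. i)"
    using sum.reindex[OF inj, of id] by simp
  then show ?thesis by (simp add: sum_lessThan_eq_choose_two)
qed

lemma diagram_eq_UN: "diagram X = (\<Union>x\<in>X. {beads_above X x} \<times> {..< x - beads_below X x})"
  unfolding diagram_def by auto

lemma finite_diagram: "finite X \<Longrightarrow> finite (diagram X)"
  by (simp add: diagram_eq_UN)

lemma card_diagram:
  assumes "finite X"
  shows "card (diagram X) + (card X choose 2) = \<Sum>X"
proof -
  have "card (diagram X) = (\<Sum>x\<in>X. card ({beads_above X x} \<times> {..< x - beads_below X x}))"
    unfolding diagram_eq_UN
    by (rule card_UN_disjoint) (use assms beads_above_inj[OF assms] in auto)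
  also have "\<dots> = \<Sum>X - (\<Sum>x\<in>X. beads_below X x)"
    by (simp add: card_cartesian_product sum_subtractf_nat beads_below_le)
  finally show ?thesis
    using sum_beads_below[OF assms] sum_mono[of X "beads_below X" id] beads_below_le by simp
qed

lemma beads_above_below_mono_image:
  assumes "finite X" "\<And>u z. u \<in> X \<Longrightarrow> z \<in> X \<Longrightarrow> u < z \<longleftrightarrow> f u < f z" "u \<in> X"
  shows "beads_above (f ` X) (f u) = beads_above X u" "beads_below (f ` X) (f u) = beads_below X u"
proof -
  have inj: "inj_on f A" if "A \<subseteq> X" for A
    by (rule inj_onI) (metis assms(2) that less_irrefl nat_neq_iff subsetD)
  have "{z\<in>f ` X. f u < z} = f ` {z\<in>X. u < z}" using assms by auto
  then show "beads_above (f ` X) (f u) = beads_above X u"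
    unfolding beads_above_def by (simp add: card_image inj)
  have "{z\<in>f ` X. z < f u} = f ` {z\<in>X. z < u}" using assms by auto
  then show "beads_below (f ` X) (f u) = beads_below X u"
    unfolding beads_below_def by (simp add: card_image inj)
qed

lemma diagram_image_strict_mono:
  assumes "finite X" "\<And>u z. u \<in> X \<Longrightarrow> z \<in> X \<Longrightarrow> u < z \<longleftrightarrow> f u < f z"
  shows "diagram (f ` X) = {(i, j). \<exists>u\<in>X. i = beads_above X u \<and> j + beads_below X u < f u}"
  using beads_above_below_mono_image[OF assms] unfolding diagram_def by fastforce

definition lower_bead :: "nat \<Rightarrow> nat \<Rightarrow> nat" where
  "lower_bead x z = (if z = x then x - 1 else z)"

lemma lower_bead_mono:
  assumes "x - 1 \<notin> X" "0 < x" "u \<in> X" "z \<in> X"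
  shows "u < z \<longleftrightarrow> lower_bead x u < lower_bead x z"
proof -
  have "u \<noteq> x - 1" "z \<noteq> x - 1" using assms by auto
  then show ?thesis using assms unfolding lower_bead_def by (cases "u = x"; cases "z = x") auto
qed

lemma image_lower_bead: "x \<in> X \<Longrightarrow> lower_bead x ` X = insert (x - 1) (X - {x})"
  unfolding lower_bead_def by auto

lemma diagram_lower_bead:
  assumes fin: "finite X" and x: "x \<in> X" "0 < x" "x - 1 \<notin> X"
  shows "diagram (insert (x - 1) (X - {x})) = diagram X - {(beads_above X x, x - 1 - beads_below X x)}"
    and "(beads_above X x, x - 1 - beads_below X x) \<in> diagram X"
proof -
  let ?X' = "insert (x - 1) (X - {x})"
  have below_x: "beads_below X x \<le> x - 1" using beads_below_le_pred[OF x(3) x(2)] .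
  have "diagram ?X' = {(i, j). \<exists>u\<in>X. i = beads_above X u \<and> j + beads_below X u < lower_bead x u}"
    using diagram_image_strict_mono[OF fin lower_bead_mono[OF x(3) x(2)]] image_lower_bead[OF x(1)]
    by simp
  also have "\<dots> = diagram X - {(beads_above X x, x - 1 - beads_below X x)}"
  proof (intro set_eqI iffI)
    fix c assume "c \<in> {(i, j). \<exists>u\<in>X. i = beads_above X u \<and> j + beads_below X u < lower_bead x u}"
    then obtain i j u where c: "c = (i, j)" "u \<in> X" "i = beads_above X u" "j + beads_below X u < lower_bead x u" by blast
    show "c \<in> diagram X - {(beads_above X x, x - 1 - beads_below X x)}"
    proof (cases "u = x")
      case True
      then show ?thesis using c below_x unfolding diagram_def lower_bead_def by auto
    next
      case False
      then have "beads_above X u \<noteq> beads_above X x" using beads_above_inj[OF fin c(2) x(1)] by blast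
      then show ?thesis using c False unfolding diagram_def lower_bead_def by auto
    qed
  next
    fix c assume "c \<in> diagram X - {(beads_above X x, x - 1 - beads_below X x)}"
    then obtain i j u where c: "c = (i, j)" "u \<in> X" "i = beads_above X u" "j + beads_below X u < u"
      and ne: "c \<noteq> (beads_above X x, x - 1 - beads_below X x)" unfolding diagram_def by blast
    show "c \<in> {(i, j). \<exists>u\<in>X. i = beads_above X u \<and> j + beads_below X u < lower_bead x u}"
    proof (cases "u = x")
      case True
      then have "j + beads_below X u < x - 1" using c ne by auto
      then show ?thesis using c True unfolding lower_bead_def by auto
    next
      case False
      then show ?thesis using c unfolding lower_bead_def by auto
    qed
  qed
  finally show "diagram ?X' = diagram X - {(beads_above X x, x - 1 - beads_below X x)}" .
  show "(beads_above X x, x - 1 - beads_below X x) \<in> diagram X"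
    unfolding diagram_def using x below_x by auto
qed

lemma beads_above_below_pred:
  assumes "finite X" "u \<in> X" "u - 1 \<in> X" "0 < u"
  shows "beads_above X (u - 1) = Suc (beads_above X u)" "beads_below X u = Suc (beads_below X (u - 1))"
proof -
  have "{z\<in>X. u - 1 < z} = insert u {z\<in>X. u < z}" using assms by auto
  then show "beads_above X (u - 1) = Suc (beads_above X u)" unfolding beads_above_def using assms by simp
  have "{z\<in>X. z < u} = insert (u - 1) {z\<in>X. z < u - 1}" using assms by auto
  then show "beads_below X u = Suc (beads_below X (u - 1))" unfolding beads_below_def using assms by simp
qed

definition removable :: "nat set \<Rightarrow> nat set" where
  "removable X = {x\<in>X. 0 < x \<and> x - 1 \<notin> X}"

lemma removable_last_cell_in_corners:
  assumes fin: "finite X" and "x \<in> removable X"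
  shows "(beads_above X x, x - 1 - beads_below X x) \<in> corners (diagram X)"
proof -
  have x: "x \<in> X" "0 < x" "x - 1 \<notin> X" using assms(2) by (auto simp: removable_def)
  have below_x: "beads_below X x \<le> x - 1" using beads_below_le_pred[OF x(3) x(2)] .
  have "(beads_above X x, Suc (x - 1 - beads_below X x)) \<notin> diagram X"
  proof
    assume "(beads_above X x, Suc (x - 1 - beads_below X x)) \<in> diagram X"
    then obtain u where "u \<in> X" "beads_above X x = beads_above X u"
      "Suc (x - 1 - beads_below X x) + beads_below X u < u"
      unfolding diagram_def by blast
    then show False using beads_above_inj[OF fin x(1)] below_x by fastforce
  qed
  moreover have "(Suc (beads_above X x), x - 1 - beads_below X x) \<notin> diagram X"
  proof
    assume "(Suc (beads_above X x), x - 1 - beads_below X x) \<in> diagram X"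
    then obtain u where u: "u \<in> X" "Suc (beads_above X x) = beads_above X u"
      "x - 1 - beads_below X x + beads_below X u < u"
      unfolding diagram_def by blast
    have "u < x" using beads_above_less_imp_greater[OF fin x(1) u(1)] u(2) by simp
    then have "u \<le> x - 2" using x(3) u(1) by (cases "u = x - 1") auto
    have "beads_below X x = Suc (beads_below X u)"
      using beads_above_below_card[OF fin x(1)] beads_above_below_card[OF fin u(1)] u(2) by simp
    then show False using u(3) \<open>u \<le> x - 2\<close> below_x by linarith
  qed
  ultimately show ?thesis using diagram_lower_bead(2)[OF fin x] by (simp add: corners_def)
qed

lemma corners_diagram_subset:
  assumes fin: "finite X"
  shows "corners (diagram X) \<subseteq> (\<lambda>x. (beads_above X x, x - 1 - beads_below X x)) ` removable X"
proof
  fix c assume c: "c \<in> corners (diagram X)"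
  then obtain i j u where ij: "c = (i, j)" "u \<in> X" "i = beads_above X u" "j + beads_below X u < u"
    unfolding corners_def diagram_def by blast
  have no_right: "(i, Suc j) \<notin> diagram X" and no_below: "(Suc i, j) \<notin> diagram X"
    using c ij by (auto simp: corners_def)
  have "\<not> (Suc j + beads_below X u < u)" using no_right ij unfolding diagram_def by blast
  then have j: "j = u - 1 - beads_below X u" using ij by linarith
  have u0: "0 < u" using ij by linarith
  have "u - 1 \<notin> X"
  proof
    assume w: "u - 1 \<in> X"
    have "beads_above X (u - 1) = Suc i" "beads_below X u = Suc (beads_below X (u - 1))"
      using beads_above_below_pred[OF fin ij(2) w u0] ij by auto
    then have "(Suc i, j) \<in> diagram X" unfolding diagram_def using w j ij
      by (auto intro!: bexI[of _ "u - 1"])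
    then show False using no_below by simp
  qed
  then show "c \<in> (\<lambda>x. (beads_above X x, x - 1 - beads_below X x)) ` removable X"
    using ij j u0 by (auto simp: removable_def)
qed

lemma bij_betw_removable_corners:
  assumes "finite X"
  shows "bij_betw (\<lambda>x. (beads_above X x, x - 1 - beads_below X x)) (removable X) (corners (diagram X))"
  unfolding bij_betw_def
  using beads_above_inj[OF assms] removable_last_cell_in_corners[OF assms] corners_diagram_subset[OF assms]
  by (auto simp: inj_on_def removable_def)

lemma diagram_insert_0_Suc:
  assumes "finite X"
  shows "diagram (insert 0 (Suc ` X)) = diagram X"
proof -
  let ?X' = "insert 0 (Suc ` X)"
  have above_Suc: "beads_above ?X' (Suc u) = beads_above X u" for u
  proof -
    have "{z\<in>?X'. Suc u < z} = Suc ` {z\<in>X. u < z}" by auto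
    then show ?thesis unfolding beads_above_def by (simp add: card_image)
  qed
  have below_Suc: "beads_below ?X' (Suc u) = Suc (beads_below X u)" for u
  proof -
    have "{z\<in>?X'. z < Suc u} = insert 0 (Suc ` {z\<in>X. z < u})" by auto
    then show ?thesis unfolding beads_below_def using assms by (simp add: card_image card_insert_if)
  qed
  show ?thesis
  proof (intro set_eqI iffI)
    fix c assume "c \<in> diagram ?X'"
    then obtain i j w where c: "c = (i, j)" "w \<in> ?X'" "i = beads_above ?X' w" "j + beads_below ?X' w < w"
      unfolding diagram_def by blast
    then obtain u where "w = Suc u" "u \<in> X" by auto
    then show "c \<in> diagram X" using c above_Suc below_Suc unfolding diagram_def by auto
  next
    fix c assume "c \<in> diagram X"
    then obtain i j u where c: "c = (i, j)" "u \<in> X" "i = beads_above X u" "j + beads_below X u < u"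
      unfolding diagram_def by blast
    then have "Suc u \<in> ?X'" "beads_above ?X' (Suc u) = i" "j + beads_below ?X' (Suc u) < Suc u"
      using above_Suc below_Suc by auto
    then show "c \<in> diagram ?X'" unfolding diagram_def using c(1) by blast
  qed
qed

section \<open>The hook length formula\<close>

definition vandermonde :: "nat set \<Rightarrow> real" where
  "vandermonde X = (\<Prod>x\<in>X. \<Prod>y\<in>{y\<in>X. y < x}. (real x - real y))"

definition fact_prod :: "nat set \<Rightarrow> real" where
  "fact_prod X = (\<Prod>x\<in>X. fact x)"

definition frobenius :: "nat set \<Rightarrow> real" where
  "frobenius X = fact (card (diagram X)) * vandermonde X / fact_prod X"

lemma fact_prod_pos: "fact_prod X > 0"
  unfolding fact_prod_def by (simp add: prod_pos)

lemma vandermonde_insert: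
  assumes "finite X" "a \<notin> X"
  shows "vandermonde (insert a X) = vandermonde X * (\<Prod>y\<in>X. \<bar>real a - real y\<bar>)"
proof -
  have "vandermonde (insert a X) = (\<Prod>y\<in>{y\<in>insert a X. y < a}. (real a - real y)) *
          (\<Prod>x\<in>X. \<Prod>y\<in>{y\<in>insert a X. y < x}. (real x - real y))"
    unfolding vandermonde_def using assms by simp
  also have "{y\<in>insert a X. y < a} = {y\<in>X. y < a}" by auto
  also have "(\<Prod>x\<in>X. \<Prod>y\<in>{y\<in>insert a X. y < x}. (real x - real y))
      = (\<Prod>x\<in>X. (if a < x then real x - real a else 1) * (\<Prod>y\<in>{y\<in>X. y < x}. (real x - real y)))"
  proof (rule prod.cong[OF refl])
    fix x assume x: "x \<in> X"
    show "(\<Prod>y\<in>{y\<in>insert a X. y < x}. (real x - real y)) =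
          (if a < x then real x - real a else 1) * (\<Prod>y\<in>{y\<in>X. y < x}. (real x - real y))"
    proof (cases "a < x")
      case True
      then have "{y\<in>insert a X. y < x} = insert a {y\<in>X. y < x}" by auto
      then show ?thesis using True assms by simp
    next
      case False
      then have "{y\<in>insert a X. y < x} = {y\<in>X. y < x}" by auto
      then show ?thesis using False by simp
    qed
  qed
  also have "\<dots> = (\<Prod>x\<in>X. (if a < x then real x - real a else 1)) * vandermonde X"
    unfolding vandermonde_def by (simp add: prod.distrib)
  finally have L: "vandermonde (insert a X) = (\<Prod>y\<in>{y\<in>X. y < a}. (real a - real y)) *
     ((\<Prod>x\<in>X. (if a < x then real x - real a else 1)) * vandermonde X)" .
  have "(\<Prod>y\<in>X. \<bar>real a - real y\<bar>) =
       (\<Prod>y\<in>X. (if y < a then real a - real y else 1) * (if a < y then real y - real a else 1))"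
    by (rule prod.cong[OF refl]) (use assms in auto)
  also have "\<dots> = (\<Prod>y\<in>{y\<in>X. y < a}. (real a - real y)) * (\<Prod>x\<in>X. (if a < x then real x - real a else 1))"
    by (simp add: prod.distrib prod.inter_filter[OF assms(1)])
  finally show ?thesis using L by (simp add: mult_ac)
qed

lemma fact_prod_insert: "finite X \<Longrightarrow> a \<notin> X \<Longrightarrow> fact_prod (insert a X) = fact a * fact_prod X"
  unfolding fact_prod_def by simp

lemma down_closed_eq_lessThan:
  assumes fin: "finite X" and dc: "\<forall>x\<in>X. 0 < x \<longrightarrow> x - 1 \<in> X"
  shows "X = {..<card X}"
proof -
  have dc2: "\<And>x d. x \<in> X \<Longrightarrow> x - d \<in> X"
  proof -
    fix x d assume "x \<in> X"
    then show "x - d \<in> X"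
    proof (induction d)
      case 0 then show ?case by simp
    next
      case (Suc d)
      then have "x - d \<in> X" by simp
      then show ?case using dc by (cases "x - d = 0") (auto simp: diff_Suc split: nat.splits)
    qed
  qed
  have sub: "X \<subseteq> {..<card X}"
  proof
    fix x assume x: "x \<in> X"
    have "{..x} \<subseteq> X"
    proof
      fix y assume "y \<in> {..x}"
      then have "y = x - (x - y)" by simp
      then show "y \<in> X" using dc2[OF x, of "x - y"] by simp
    qed
    then have "card {..x} \<le> card X" by (rule card_mono[OF fin])
    then show "x \<in> {..<card X}" by simp
  qed
  then show ?thesis by (metis card_lessThan card_subset_eq finite_lessThan)
qed

lemma vandermonde_lessThan: "vandermonde {..<k} = fact_prod {..<k}"
proof (induction k)
  case 0 then show ?case by (simp add: vandermonde_def fact_prod_def)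
next
  case (Suc k)
  have "vandermonde {..<Suc k} = vandermonde {..<k} * (\<Prod>y<k. \<bar>real k - real y\<bar>)"
    using vandermonde_insert[of "{..<k}" k] by (simp add: lessThan_Suc)
  also have "(\<Prod>y<k. \<bar>real k - real y\<bar>) = (\<Prod>y<k. real (k - y))"
    by (rule prod.cong) auto
  also have "\<dots> = fact k" by (simp add: fact_prod_rev atLeast0LessThan)
  finally show ?case using Suc fact_prod_insert[of "{..<k}" k] by (simp add: lessThan_Suc mult.commute)
qed

lemma prod_abs_pred_diff:
  assumes "finite A" "x - 1 \<notin> A" "x \<notin> A" "0 < x"
  shows "(\<Prod>y\<in>A. \<bar>real x - 1 - real y\<bar>) =
    (\<Prod>y\<in>A. \<bar>real x - real y\<bar>) * (\<Prod>y\<in>A. (real x - 1 - real y) / (real x - real y))"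
proof -
  have "\<bar>real x - 1 - real y\<bar> = \<bar>real x - real y\<bar> * ((real x - 1 - real y) / (real x - real y))"
    if "y \<in> A" for y
  proof -
    have "y < x - 1 \<or> x < y" using that assms(2-4) by (metis Suc_pred' linorder_neqE_nat not_less_eq)
    then show ?thesis
    proof
      assume "y < x - 1"
      then have "real y + 1 < real x" using assms(4) by linarith
      then show ?thesis by simp
    next
      assume "x < y"
      then have "real x < real y" by simp
      then show ?thesis by (simp add: abs_if divide_simps) (simp add: algebra_simps)
    qed
  qed
  then show ?thesis by (simp add: prod.distrib[symmetric])
qed

lemma frobenius_lower_bead:
  assumes fin: "finite X" and x: "x \<in> X" "0 < x" "x - 1 \<notin> X" and n: "card (diagram X) = n"
  shows "frobenius (insert (x - 1) (X - {x})) =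
     frobenius X * (real x / real n) * (\<Prod>y\<in>X - {x}. (real x - 1 - real y) / (real x - real y))"
proof -
  let ?A = "X - {x}"
  have finA: "finite ?A" using fin by simp
  have X: "X = insert x ?A" using x by auto
  have cm: "diagram (insert (x - 1) ?A) = diagram X - {(beads_above X x, x - 1 - beads_below X x)}"
    and cin: "(beads_above X x, x - 1 - beads_below X x) \<in> diagram X" using diagram_lower_bead[OF fin x] by auto
  have n1: "n \<ge> 1" using cin finite_diagram[OF fin] n by (metis card_0_eq empty_iff less_one not_le)
  have cn: "card (diagram (insert (x - 1) ?A)) = n - 1"
    using cm cin finite_diagram[OF fin] n by simp
  have nA: "x - 1 \<notin> ?A" "x \<notin> ?A" using x by auto
  have DX: "vandermonde X = vandermonde ?A * (\<Prod>y\<in>?A. \<bar>real x - real y\<bar>)"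
    using vandermonde_insert[OF finA nA(2)] X by simp
  have DX': "vandermonde (insert (x - 1) ?A) = vandermonde ?A * (\<Prod>y\<in>?A. \<bar>real x - 1 - real y\<bar>)"
    using vandermonde_insert[OF finA nA(1)] x by (simp add: of_nat_diff)
  have PX: "fact_prod X = fact x * fact_prod ?A" using fact_prod_insert[OF finA nA(2)] X by simp
  have PX': "fact_prod (insert (x - 1) ?A) = fact (x - 1) * fact_prod ?A" using fact_prod_insert[OF finA nA(1)] by simp
  have absq: "(\<Prod>y\<in>?A. \<bar>real x - 1 - real y\<bar>) =
      (\<Prod>y\<in>?A. \<bar>real x - real y\<bar>) * (\<Prod>y\<in>?A. (real x - 1 - real y) / (real x - real y))"
    using prod_abs_pred_diff[OF finA] nA x(2) by simp
  have fn: "(fact n :: real) = real n * fact (n - 1)"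
    using n1 by (metis Suc_diff_1 fact_Suc less_le_trans zero_less_one of_nat_mult)
  have fx: "(fact x :: real) = real x * fact (x - 1)" using x by (metis Suc_diff_1 fact_Suc of_nat_mult)
  have "frobenius (insert (x - 1) ?A) = fact (n - 1) * (vandermonde ?A * ((\<Prod>y\<in>?A. \<bar>real x - real y\<bar>) *
      (\<Prod>y\<in>?A. (real x - 1 - real y) / (real x - real y)))) / (fact (x - 1) * fact_prod ?A)"
    unfolding frobenius_def cn DX' PX' absq ..
  also have "\<dots> = frobenius X * (real x / real n) * (\<Prod>y\<in>?A. (real x - 1 - real y) / (real x - real y))"
    unfolding frobenius_def n DX PX fn fx using n1 x fact_prod_pos[of ?A] by (simp add: field_simps)
  finally show ?thesis .
qed

lemma sum_branching_weights:
  assumes "finite X"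
  shows "(\<Sum>x\<in>X. real x * (\<Prod>y\<in>X - {x}. (real x - 1 - real y) / (real x - real y)))
    = real (card (diagram X))"
proof -
  have inj: "inj_on real A" for A :: "nat set" by (simp add: inj_on_def)
  have "(\<Sum>x\<in>X. real x * (\<Prod>y\<in>X - {x}. (real x - 1 - real y) / (real x - real y)))
      = (\<Sum>x\<in>real ` X. x * (\<Prod>y\<in>real ` X - {x}. (x - 1 - y) / (x - y)))"
  proof -
    have "real ` X - {real x} = real ` (X - {x})" for x by auto
    then show ?thesis by (simp add: sum.reindex[OF inj] prod.reindex[OF inj])
  qed
  also have "\<dots> = real (\<Sum>X) - real (card X choose 2)"
    using branching_weight_identity[of "real ` X"] assms by (simp add: sum.reindex[OF inj] card_image[OF inj])
  also have "\<dots> = real (card (diagram X))"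
  proof -
    have "real (card (diagram X)) + real (card X choose 2) = real (\<Sum>X)"
      using card_diagram[OF assms] by (metis of_nat_add)
    then show ?thesis by linarith
  qed
  finally show ?thesis .
qed

lemma frobenius_branching:
  assumes "finite X" "diagram X \<noteq> {}"
  shows "frobenius X = (\<Sum>x\<in>removable X. frobenius (insert (x - 1) (X - {x})))"
proof -
  let ?n = "card (diagram X)"
  let ?G = "\<lambda>x. real x * (\<Prod>y\<in>X - {x}. (real x - 1 - real y) / (real x - real y))"
  have "?n > 0" using assms finite_diagram by (simp add: card_gt_0_iff)
  have "(\<Sum>x\<in>removable X. frobenius (insert (x - 1) (X - {x})))
      = (\<Sum>x\<in>removable X. frobenius X / real ?n * ?G x)"
  proof (rule sum.cong[OF refl])
    fix x assume "x \<in> removable X"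
    then have x: "x \<in> X" "0 < x" "x - 1 \<notin> X" by (auto simp: removable_def)
    show "frobenius (insert (x - 1) (X - {x})) = frobenius X / real ?n * ?G x"
      using frobenius_lower_bead[OF assms(1) x refl] by simp
  qed
  also have "\<dots> = (\<Sum>x\<in>X. frobenius X / real ?n * ?G x)"
  proof (rule sum.mono_neutral_left[OF assms(1)])
    show "removable X \<subseteq> X" by (auto simp: removable_def)
    show "\<forall>x\<in>X - removable X. frobenius X / real ?n * ?G x = 0"
    proof
      fix x assume x: "x \<in> X - removable X"
      show "frobenius X / real ?n * ?G x = 0"
      proof (cases "x = 0")
        case False
        then have "x - 1 \<in> X - {x}" using x by (auto simp: removable_def)
        moreover have "(real x - 1 - real (x - 1)) / (real x - real (x - 1)) = 0"
          using False by (simp add: of_nat_diff)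
        ultimately have "(\<Prod>y\<in>X - {x}. (real x - 1 - real y) / (real x - real y)) = 0"
          using assms(1) by (metis (no_types, lifting) finite_Diff prod_zero)
        then show ?thesis by simp
      qed simp
    qed
  qed
  also have "\<dots> = frobenius X / real ?n * (\<Sum>x\<in>X. ?G x)"
    by (simp add: sum_distrib_left)
  also have "\<dots> = frobenius X"
    using sum_branching_weights[OF assms(1)] \<open>?n > 0\<close> by simp
  finally show ?thesis by simp
qed

lemma card_syt_of_diagram:
  assumes "finite X"
  shows "real (card (syt_of (diagram X))) = frobenius X"
  using assms
proof (induction "card (diagram X)" arbitrary: X rule: less_induct)
  case less
  show ?case
  proof (cases "diagram X = {}")
    case True
    then have "removable X = {}"
      using bij_betw_removable_corners[OF less.prems] by (simp add: corners_def bij_betw_def)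
    then have "X = {..<card X}"
      using down_closed_eq_lessThan[OF less.prems] by (auto simp: removable_def)
    then have "frobenius X = 1"
      using True vandermonde_lessThan[of "card X"] fact_prod_pos[of X] unfolding frobenius_def by simp
    then show ?thesis using True card_syt_of_empty by simp
  next
    case False
    have IH: "real (card (syt_of (diagram X - {(beads_above X x, x - 1 - beads_below X x)})))
        = frobenius (insert (x - 1) (X - {x}))" if "x \<in> removable X" for x
    proof -
      have x: "x \<in> X" "0 < x" "x - 1 \<notin> X" using that by (auto simp: removable_def)
      note lower = diagram_lower_bead[OF less.prems x]
      have "card (diagram (insert (x - 1) (X - {x}))) < card (diagram X)"
        unfolding lower(1) by (rule card_Diff1_less[OF finite_diagram[OF less.prems] lower(2)])
      moreover have "finite (insert (x - 1) (X - {x}))" using less.prems by simp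
      ultimately show ?thesis using less.hyps lower(1) by fastforce
    qed
    have "real (card (syt_of (diagram X)))
        = (\<Sum>c\<in>corners (diagram X). real (card (syt_of (diagram X - {c}))))"
      using card_syt_of_branching[OF finite_diagram[OF less.prems] False] by simp
    also have "\<dots> = (\<Sum>x\<in>removable X. real (card (syt_of (diagram X - {(beads_above X x, x - 1 - beads_below X x)}))))"
      using sum.reindex_bij_betw[OF bij_betw_removable_corners[OF less.prems],
          of "\<lambda>c. real (card (syt_of (diagram X - {c})))"] by simp
    also have "\<dots> = frobenius X"
      using IH frobenius_branching[OF less.prems False] by simp
    finally show ?thesis .
  qed
qed

section \<open>Partitions as beta-sets\<close>

definition beta :: "nat list \<Rightarrow> nat \<Rightarrow> nat" where
  "beta lam i = lam ! i + length lam - 1 - i"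

lemma H_eq_beta_image: "H lam = beta lam ` {..<length lam}"
  unfolding H_def beta_def by auto

lemma partition_nth_pos:
  assumes "is_partition lam" "i < length lam"
  shows "lam ! i \<ge> 1"
proof -
  have "lam ! i \<in> set lam" using assms(2) by (rule nth_mem)
  then have "0 < lam ! i" using assms(1) unfolding is_partition_def by blast
  then show ?thesis by simp
qed

lemma partition_nth_antimono: "is_partition lam \<Longrightarrow> i < j \<Longrightarrow> j < length lam \<Longrightarrow> lam ! j \<le> lam ! i"
  unfolding is_partition_def using sorted_wrt_nth_less by fastforce

lemma beta_eq: "is_partition lam \<Longrightarrow> i < length lam \<Longrightarrow> beta lam i = lam ! i + (length lam - 1 - i)"
  unfolding beta_def using partition_nth_pos[of lam i] by simp

lemma beta_strict_antimono:
  assumes "is_partition lam" "i < j" "j < length lam"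
  shows "beta lam j < beta lam i"
  using beta_eq[OF assms(1)] partition_nth_antimono[OF assms] assms by simp

lemma beta_less_iff:
  assumes "is_partition lam" "i < length lam" "j < length lam"
  shows "beta lam i < beta lam j \<longleftrightarrow> j < i"
  using beta_strict_antimono[OF assms(1)] assms by (metis less_asym nat_neq_iff)

lemma inj_on_beta: "is_partition lam \<Longrightarrow> inj_on (beta lam) {..<length lam}"
  by (rule inj_onI) (metis beta_strict_antimono lessThan_iff nat_neq_iff)

lemma card_H: "is_partition lam \<Longrightarrow> card (H lam) = length lam"
  by (simp add: H_eq_beta_image card_image inj_on_beta)

lemma finite_H: "finite (H lam)"
  by (simp add: H_eq_beta_image)

lemma beads_above_H_beta:
  assumes "is_partition lam" "i < length lam"
  shows "beads_above (H lam) (beta lam i) = i"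
proof -
  have "{z\<in>H lam. beta lam i < z} = beta lam ` {..<i}"
    using beta_less_iff[OF assms(1) assms(2)] assms(2) by (auto simp: H_eq_beta_image)
  moreover have "inj_on (beta lam) {..<i}" using inj_on_beta[OF assms(1)]
    by (rule inj_on_subset) (use assms(2) in auto)
  ultimately show ?thesis unfolding beads_above_def by (simp add: card_image)
qed

lemma beads_below_H_beta:
  assumes "is_partition lam" "i < length lam"
  shows "beads_below (H lam) (beta lam i) = length lam - 1 - i"
proof -
  have "{z\<in>H lam. z < beta lam i} = beta lam ` {i<..<length lam}"
    using beta_less_iff[OF assms(1) _ assms(2)] by (auto simp: H_eq_beta_image)
  moreover have "inj_on (beta lam) {i<..<length lam}" using inj_on_beta[OF assms(1)]
    by (rule inj_on_subset) auto
  ultimately show ?thesis unfolding beads_below_def by (simp add: card_image)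
qed

lemma cells_eq_diagram_H:
  assumes "is_partition lam"
  shows "cells lam = diagram (H lam)"
proof (intro set_eqI iffI)
  fix c assume "c \<in> cells lam"
  then obtain i j where c: "c = (i, j)" "i < length lam" "j < lam ! i" by (auto simp: cells_def)
  have "beta lam i \<in> H lam" using c by (auto simp: H_eq_beta_image)
  moreover have "i = beads_above (H lam) (beta lam i)" using beads_above_H_beta[OF assms c(2)] by simp
  moreover have "j + beads_below (H lam) (beta lam i) < beta lam i"
    using beads_below_H_beta[OF assms c(2)] beta_eq[OF assms c(2)] c by simp
  ultimately show "c \<in> diagram (H lam)" unfolding diagram_def using c(1) by blast
next
  fix c assume "c \<in> diagram (H lam)"
  then obtain i j x where c: "c = (i, j)" "x \<in> H lam" "i = beads_above (H lam) x" "j + beads_below (H lam) x < x"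
    unfolding diagram_def by blast
  then obtain i' where i': "i' < length lam" "x = beta lam i'" by (auto simp: H_eq_beta_image)
  then have "i = i'" using beads_above_H_beta[OF assms i'(1)] c by simp
  then show "c \<in> cells lam" using c i' beads_below_H_beta[OF assms i'(1)] beta_eq[OF assms i'(1)]
    by (auto simp: cells_def)
qed

lemma card_cells: "card (cells lam) = sum_list lam"
proof -
  have "cells lam = (\<Union>i<length lam. {i} \<times> {..<lam ! i})" by (auto simp: cells_def)
  then have "card (cells lam) = (\<Sum>i<length lam. card ({i} \<times> {..<lam ! i}))"
    by (simp only:) (rule card_UN_disjoint, auto)
  also have "\<dots> = (\<Sum>i<length lam. lam ! i)" by (simp add: card_cartesian_product)
  finally show ?thesis by (simp add: sum_list_sum_nth atLeast0LessThan)
qed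

lemma SYT_eq_syt_of:
  assumes "is_partition lam"
  shows "SYT lam = syt_of (cells lam)"
proof -
  have d1: "\<And>i j. (i, Suc j) \<in> cells lam \<Longrightarrow> (i, j) \<in> cells lam" by (auto simp: cells_def)
  have d2: "\<And>i j. (Suc i, j) \<in> cells lam \<Longrightarrow> (i, j) \<in> cells lam"
  proof -
    fix i j assume "(Suc i, j) \<in> cells lam"
    then have "Suc i < length lam" "j < lam ! Suc i" by (auto simp: cells_def)
    moreover have "lam ! Suc i \<le> lam ! i" using partition_nth_antimono[OF assms, of i "Suc i"] calculation by simp
    ultimately show "(i, j) \<in> cells lam" by (auto simp: cells_def)
  qed
  show ?thesis unfolding SYT_def using syt_of_down_closed[OF d1 d2] card_cells by simp
qed

lemma num_syt_eq_frobenius: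
  assumes "is_partition lam"
  shows "real (num_syt lam) = frobenius (H lam)"
  unfolding num_syt_def SYT_eq_syt_of[OF assms] cells_eq_diagram_H[OF assms]
  using card_syt_of_diagram[OF finite_H] .

lemma partition_eq_if_H_eq:
  assumes "is_partition l1" "is_partition l2" "H l1 = H l2"
  shows "l1 = l2"
proof (rule nth_equalityI)
  show len: "length l1 = length l2" using card_H assms by metis
  fix i assume i: "i < length l1"
  have i2: "i < length l2" using i len by simp
  have "beta l1 i \<in> H l1" "beta l2 i \<in> H l1" using i i2 assms(3) by (auto simp: H_eq_beta_image)
  moreover have "beads_above (H l1) (beta l1 i) = beads_above (H l1) (beta l2 i)"
    using beads_above_H_beta[OF assms(1) i] beads_above_H_beta[OF assms(2) i2] assms(3) by simp
  ultimately have "beta l1 i = beta l2 i" using beads_above_inj[OF finite_H] by blast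
  then show "l1 ! i = l2 ! i" using beta_eq[OF assms(1) i] beta_eq[OF assms(2) i2] len by simp
qed

lemma sorted_wrt_greater_nth_gap:
  assumes "sorted_wrt (>) d" "i \<le> j" "j < length d"
  shows "d ! j + (j - i) \<le> d ! i"
  using assms(2,3)
proof (induction j)
  case 0 then show ?case by simp
next
  case (Suc j)
  show ?case
  proof (cases "i = Suc j")
    case True then show ?thesis by simp
  next
    case False
    then have "i \<le> j" using Suc by simp
    then have "d ! j + (j - i) \<le> d ! i" using Suc by simp
    moreover have "d ! Suc j < d ! j" using sorted_wrt_nth_less[OF assms(1), of j "Suc j"] Suc by simp
    ultimately show ?thesis using \<open>i \<le> j\<close> by simp
  qed
qed

lemma partition_with_H_exists:
  assumes finite_Y: "finite Y" and zero_notin: "0 \<notin> Y"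
  shows "\<exists>lam. is_partition lam \<and> H lam = Y"
proof -
  define d where "d = rev (sorted_list_of_set Y)"
  define k where "k = card Y"
  have length_d: "length d = k" by (simp add: d_def k_def)
  have d_decreasing: "sorted_wrt (>) d" unfolding d_def sorted_wrt_rev
    using strict_sorted_list_of_set[of Y] by simp
  have set_d: "set d = Y" using finite_Y by (simp add: d_def)
  have d_large: "\<And>i. i < k \<Longrightarrow> d ! i \<ge> k - i"
  proof -
    fix i assume i: "i < k"
    have "d ! (k - 1) \<in> Y" using set_d length_d i by (metis diff_less less_nat_zero_code neq0_conv nth_mem zero_less_one)
    then have "d ! (k - 1) \<ge> 1" using zero_notin by (metis less_one not_le)
    moreover have "d ! (k - 1) + (k - 1 - i) \<le> d ! i"
      using sorted_wrt_greater_nth_gap[OF d_decreasing, of i "k - 1"] i length_d by simp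
    ultimately show "d ! i \<ge> k - i" using i by linarith
  qed
  define lam where "lam = map (\<lambda>i. d ! i - (k - 1 - i)) [0..<k]"
  have length_lam: "length lam = k" by (simp add: lam_def)
  have nth_lam: "\<And>i. i < k \<Longrightarrow> lam ! i = d ! i - (k - 1 - i)" by (simp add: lam_def)
  have "is_partition lam"
    unfolding is_partition_def
  proof
    have A: "\<And>i j. i < j \<Longrightarrow> j < length lam \<Longrightarrow> lam ! j \<le> lam ! i"
    proof -
      fix i j assume ij: "i < j" "j < length lam"
      then have "d ! j + (j - i) \<le> d ! i"
        using sorted_wrt_greater_nth_gap[OF d_decreasing, of i j] length_lam length_d by simp
      then show "lam ! j \<le> lam ! i" using ij length_lam nth_lam[of i] nth_lam[of j] d_large[of i] d_large[of j] by simp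
    qed
    show "sorted_wrt (\<ge>) lam" unfolding sorted_wrt_iff_nth_less using A by blast
    show "\<forall>x\<in>set lam. 0 < x"
    proof
      fix x assume "x \<in> set lam"
      then obtain i where "i < k" "x = lam ! i" using length_lam by (metis in_set_conv_nth)
      then show "0 < x" using nth_lam d_large by fastforce
    qed
  qed
  moreover have "H lam = Y"
  proof -
    have "H lam = (\<lambda>i. lam ! i + k - 1 - i) ` {..<k}" unfolding H_def length_lam by auto
    also have "\<dots> = (\<lambda>i. d ! i) ` {..<k}"
    proof (rule image_cong[OF refl])
      fix i assume "i \<in> {..<k}"
      then have "i < k" by simp
      then show "lam ! i + k - 1 - i = d ! i" using nth_lam[of i] d_large[of i] by simp
    qed
    also have "\<dots> = set d" using length_d by (auto simp: in_set_conv_nth)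
    finally show ?thesis using set_d by simp
  qed
  ultimately show ?thesis by blast
qed

lemma ex1_partition_with_H:
  assumes "finite Y" "0 \<notin> Y"
  shows "\<exists>!lam. is_partition lam \<and> H lam = Y"
proof -
  obtain lam where lam: "is_partition lam" "H lam = Y" using partition_with_H_exists[OF assms] by blast
  show ?thesis
  proof (rule ex1I[of _ lam])
    show "is_partition lam \<and> H lam = Y" using lam by simp
    fix l assume "is_partition l \<and> H l = Y"
    then show "l = lam" using partition_eq_if_H_eq[of l lam] lam by simp
  qed
qed

lemma shift_Suc: "shift X (Suc r) = insert 0 (Suc ` shift X r)"
proof -
  have "Suc ` shift X r = (\<lambda>x. x + Suc r) ` X \<union> Suc ` {0..<r}"
    unfolding shift_def image_Un image_image by simp
  moreover have "{0..<Suc r} = insert 0 (Suc ` {0..<r})" by (rule atLeast0_lessThan_Suc_eq_insert_0)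
  ultimately show ?thesis unfolding shift_def by auto
qed

lemma shift_0: "shift X 0 = X" unfolding shift_def by simp

lemma finite_shift: "finite X \<Longrightarrow> finite (shift X r)" unfolding shift_def by simp

lemma diagram_shift: "finite X \<Longrightarrow> diagram (shift X r) = diagram X"
  by (induction r) (simp_all add: shift_0 shift_Suc diagram_insert_0_Suc finite_shift)

lemma frobenius_add_bead:
  assumes fin: "finite X" and z: "0 \<in> X" and N: "\<forall>x\<in>X. x < N"
  shows "frobenius (insert N (X - {0})) * fact (card (diagram X)) * fact N * (\<Prod>x\<in>X - {0}. real x)
       = frobenius X * fact (card (diagram X) + N) * (\<Prod>x\<in>X - {0}. real (N - x))"
proof -
  let ?A = "X - {0}" let ?Y = "insert N ?A" let ?n = "card (diagram X)"
  have finA: "finite ?A" using fin by simp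
  have NA: "N \<notin> ?A" using N by auto
  have X: "X = insert 0 ?A" using z by auto
  have "card X \<ge> 1" using fin z by (metis card_0_eq empty_iff less_one not_le)
  then have cY: "card ?Y = card X" using fin z NA by (simp add: card_insert_if card_Diff_singleton)
  have sY: "\<Sum>?Y = \<Sum>X + N" using fin NA z by (simp add: sum.insert sum_diff1_nat)
  have nY: "card (diagram ?Y) = ?n + N"
    using card_diagram[OF fin] card_diagram[of ?Y] finA cY sY by simp
  have DX: "vandermonde X = vandermonde ?A * (\<Prod>y\<in>?A. real y)"
    using vandermonde_insert[OF finA, of 0] X by simp
  have DY: "vandermonde ?Y = vandermonde ?A * (\<Prod>y\<in>?A. real (N - y))"
  proof -
    have "vandermonde ?Y = vandermonde ?A * (\<Prod>y\<in>?A. \<bar>real N - real y\<bar>)"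
      using vandermonde_insert[OF finA NA] .
    also have "(\<Prod>y\<in>?A. \<bar>real N - real y\<bar>) = (\<Prod>y\<in>?A. real (N - y))"
      by (rule prod.cong[OF refl]) (use N in \<open>auto simp: of_nat_diff\<close>)
    finally show ?thesis .
  qed
  have PX: "fact_prod X = fact_prod ?A" using fact_prod_insert[OF finA, of 0] X by simp
  have PY: "fact_prod ?Y = fact N * fact_prod ?A" using fact_prod_insert[OF finA NA] .
  show ?thesis
    unfolding frobenius_def nY DX DY PX PY using fact_prod_pos[of ?A] by (simp add: field_simps)
qed

section \<open>Adding the bead \<open>2 ^ R\<close>\<close>

lemma H_le_sum_list:
  assumes "is_partition lam" "x \<in> H lam"
  shows "x \<le> sum_list lam"
proof -
  obtain i where i: "i < length lam" "x = beta lam i" using assms(2) by (auto simp: H_eq_beta_image)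
  have "(\<Sum>j\<in>{..<length lam} - {i}. 1) \<le> (\<Sum>j\<in>{..<length lam} - {i}. lam ! j)"
    by (rule sum_mono) (use partition_nth_pos[OF assms(1)] in auto)
  then have "lam ! i + (length lam - 1) \<le> (\<Sum>j<length lam. lam ! j)"
    using i(1) by (simp add: sum.remove)
  then show ?thesis using i beta_eq[OF assms(1)] by (simp add: sum_list_sum_nth atLeast0LessThan)
qed

lemma mem_shift_iff: "y \<in> shift X r \<longleftrightarrow> (r \<le> y \<and> y - r \<in> X) \<or> y < r"
  unfolding shift_def by (auto intro: image_eqI[of _ _ "y - r"])

lemma card_shift: "finite X \<Longrightarrow> card (shift X r) = card X + r"
  unfolding shift_def by (subst card_Un_disjoint) (auto simp: card_image)

lemma frobenius_shift:
  assumes "finite X"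
  shows "frobenius (shift X r) = frobenius X"
proof -
  have "frobenius (shift X r) = real (card (syt_of (diagram (shift X r))))"
    using card_syt_of_diagram[OF finite_shift[OF assms]] by simp
  also have "\<dots> = frobenius X"
    using card_syt_of_diagram[OF assms] diagram_shift[OF assms] by simp
  finally show ?thesis .
qed

lemma lam_r_spec:
  assumes "is_partition mu" "2 ^ R \<notin> shift (H mu) r"
  shows "is_partition (lam_r R mu r)" "H (lam_r R mu r) = insert (2 ^ R) (shift (H mu) r - {0})"
proof -
  have "insert (2 ^ R) (shift (H mu) r - {0}) = (shift (H mu) r \<union> {2 ^ R}) - {0}"
    by auto
  moreover have "\<exists>!lam. is_partition lam \<and> H lam = (shift (H mu) r \<union> {2 ^ R}) - {0}"
    by (rule ex1_partition_with_H) (simp_all add: finite_shift finite_H)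
  then have "is_partition (lam_r R mu r) \<and> H (lam_r R mu r) = (shift (H mu) r \<union> {2 ^ R}) - {0}"
    unfolding lam_r_def by (rule theI')
  ultimately show "is_partition (lam_r R mu r)" "H (lam_r R mu r) = insert (2 ^ R) (shift (H mu) r - {0})"
    by simp_all
qed

lemma card_H_lam_r:
  assumes "is_partition mu" "2 ^ R \<notin> shift (H mu) r" "0 < r"
  shows "card (H (lam_r R mu r)) = card (H mu) + r"
proof -
  have "0 \<in> shift (H mu) r" using assms(3) by (simp add: mem_shift_iff)
  then show ?thesis
    using lam_r_spec(2)[OF assms(1,2)] assms(2,3) card_shift[OF finite_H]
    by (simp add: finite_shift finite_H)
qed

lemma Od_num_syt_lam_r:
  assumes "is_partition mu" "sum_list mu < 2 ^ (R - 1)" "num_syt mu > 0" "0 < R"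
    and "1 \<le> r" "r \<le> 2 ^ (R - 1)"
  shows "Od (num_syt (lam_r R mu r))
    = Od (num_syt mu) * (-1) ^ (card (H mu) + r - 1) * (if 2 ^ (R - 1) - r \<in> H mu then -1 else 1)"
proof -
  let ?X = "shift (H mu) r" and ?N = "2 ^ R :: nat" and ?M = "2 ^ (R - 1) :: nat"
  let ?lam = "lam_r R mu r" and ?m = "sum_list mu"
  have N_eq: "?N = 2 * ?M" using assms(4) by (simp flip: power_Suc)
  have H_less: "x < ?M" if "x \<in> H mu" for x
    using H_le_sum_list[OF assms(1) that] assms(2) by simp
  have X_less: "x < ?N" if "x \<in> ?X" for x
    using that H_less[of "x - r"] assms(6) N_eq by (auto simp: mem_shift_iff)
  then have N_notin: "?N \<notin> ?X" by blast
  have zero_in: "0 \<in> ?X" using assms(5) by (simp add: mem_shift_iff)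
  note lam = lam_r_spec[OF assms(1) N_notin]
  have "diagram ?X = cells mu"
    using diagram_shift[OF finite_H] cells_eq_diagram_H[OF assms(1)] by simp
  then have diagram_X: "card (diagram ?X) = ?m" by (simp add: card_cells)
  have "frobenius (H ?lam) * fact ?m * fact ?N * (\<Prod>x\<in>?X - {0}. real x)
      = frobenius ?X * fact (?m + ?N) * (\<Prod>x\<in>?X - {0}. real (?N - x))"
    using frobenius_add_bead[OF finite_shift[OF finite_H] zero_in] X_less lam(2) diagram_X by simp
  then have "real (num_syt ?lam * fact ?m * fact ?N * (\<Prod>x\<in>?X - {0}. x))
      = real (num_syt mu * fact (?m + ?N) * (\<Prod>x\<in>?X - {0}. ?N - x))"
    using num_syt_eq_frobenius[OF lam(1)] num_syt_eq_frobenius[OF assms(1)] frobenius_shift[OF finite_H]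
    by (simp add: of_nat_prod)
  then have identity: "num_syt ?lam * fact ?m * fact ?N * (\<Prod>x\<in>?X - {0}. x)
      = num_syt mu * fact (?m + ?N) * (\<Prod>x\<in>?X - {0}. ?N - x)"
    by (simp only: of_nat_eq_iff)
  have "card (?X - {0}) = card (H mu) + r - 1"
    using zero_in by (simp add: card_shift finite_H finite_shift)
  moreover have "?M \<in> ?X - {0} \<longleftrightarrow> ?M - r \<in> H mu"
    using assms(6) by (auto simp: mem_shift_iff)
  moreover have "\<forall>x\<in>?X - {0}. 0 < x \<and> x < ?N" using X_less by auto
  ultimately show ?thesis
    using Od_from_fact_pow2_identity[OF assms(4) assms(2) _ _ assms(3) identity]
    by (simp add: finite_shift finite_H)
qed

lemma sum_neg_one_power_double: "(\<Sum>s<2 * t. (-1::int) ^ s) = 0"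
  by (induction t) (simp_all add: numeral_2_eq_2)

lemma parity_gap_eq_sum:
  assumes "finite X"
  shows "parity_gap X = (\<Sum>x\<in>X. (-1) ^ x)"
proof -
  have "(\<Sum>x\<in>X. (-1::int) ^ x) = (\<Sum>x\<in>X. if even x then 1 else -1)"
    by (rule sum.cong) auto
  also have "\<dots> = (\<Sum>x\<in>X \<inter> {x. even x}. 1) + (\<Sum>x\<in>X \<inter> - {x. even x}. -1)"
    by (rule sum.If_cases[OF assms])
  also have "X \<inter> {x. even x} = {x\<in>X. even x}" by auto
  also have "X \<inter> - {x. even x} = {x\<in>X. odd x}" by auto
  finally show ?thesis unfolding parity_gap_def by simp
qed

lemma sum_reflected_signs_eq_parity_gap:
  assumes "finite X" "X \<subseteq> {..<M}" "even M"
  shows "(\<Sum>r\<in>{1..M}. (-1::int)^(k + r - 1) * (if M - r \<in> X then -1 else 1))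
       = 2 * (-1)^k * parity_gap X"
proof -
  have bij: "bij_betw (\<lambda>s. M - s) {..<M} {1..M}"
    by (rule bij_betw_byWitness[where f' = "\<lambda>r. M - r"]) auto
  have "(\<Sum>r\<in>{1..M}. (-1::int)^(k + r - 1) * (if M - r \<in> X then -1 else 1))
      = (\<Sum>s<M. (-1::int)^(k + (M - s) - 1) * (if M - (M - s) \<in> X then -1 else 1))"
    using sum.reindex_bij_betw[OF bij, of "\<lambda>r. (-1::int)^(k + r - 1) * (if M - r \<in> X then -1 else 1)"]
    by simp
  also have "\<dots> = (\<Sum>s<M. (-1)^k * (2 * (if s \<in> X then (-1)^s else 0) - (-1::int)^s))"
  proof (rule sum.cong[OF refl])
    fix s assume s: "s \<in> {..<M}"
    have p: "(-1::int)^(k + (M - s) - 1) = - ((-1)^k * (-1)^s)"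
    proof -
      have "even (k + (M - s) - 1) \<longleftrightarrow> \<not> even (k + s)" using s assms(3) by simp
      then show ?thesis by (simp add: minus_one_power_iff power_add[symmetric])
    qed
    show "(-1::int)^(k + (M - s) - 1) * (if M - (M - s) \<in> X then -1 else 1)
        = (-1)^k * (2 * (if s \<in> X then (-1)^s else 0) - (-1::int)^s)"
      using s unfolding p by auto
  qed
  also have "\<dots> = (-1)^k * (2 * (\<Sum>s<M. (if s \<in> X then (-1::int)^s else 0)) - (\<Sum>s<M. (-1::int)^s))"
  proof -
    have "(\<Sum>s<M. (-1)^k * (2 * (if s \<in> X then (-1)^s else 0) - (-1::int)^s))
        = (-1)^k * (\<Sum>s<M. 2 * (if s \<in> X then (-1)^s else 0) - (-1::int)^s)"
      by (rule sum_distrib_left[symmetric])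
    also have "(\<Sum>s<M. 2 * (if s \<in> X then (-1)^s else 0) - (-1::int)^s)
        = 2 * (\<Sum>s<M. (if s \<in> X then (-1::int)^s else 0)) - (\<Sum>s<M. (-1::int)^s)"
      by (simp only: sum_subtractf sum_distrib_left)
    finally show ?thesis .
  qed
  also have "(\<Sum>s<M. (-1::int)^s) = 0" using assms(3) sum_neg_one_power_double by (metis evenE)
  also have "(\<Sum>s<M. (if s \<in> X then (-1::int)^s else 0)) = (\<Sum>s\<in>X. (-1::int)^s)"
  proof -
    have "(\<Sum>s<M. (if s \<in> X then (-1::int)^s else 0)) = (\<Sum>s\<in>{s\<in>{..<M}. s \<in> X}. (-1::int)^s)"
      by (rule sum.inter_filter[symmetric]) simp
    also have "{s\<in>{..<M}. s \<in> X} = X" using assms(2) by auto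
    finally show ?thesis .
  qed
  also have "(\<Sum>s\<in>X. (-1::int)^s) = parity_gap X"
    by (rule parity_gap_eq_sum[OF assms(1), symmetric])
  finally show ?thesis by simp
qed

theorem lemma4p4:
  fixes R m :: nat and mu :: "nat list"
  assumes "R \<ge> 2" and "m < 2 ^ (R - 1)"
    and "is_partition mu" and "sum_list mu = m"
    and "odd (num_syt mu)"
  shows "(\<forall>r. 1 \<le> r \<and> r \<le> 2 ^ (R - 1) \<longrightarrow> 2 ^ R \<notin> shift (H mu) r)
         \<and> S_L (P2up R mu) mu = 2 * (-1) ^ card (H mu) * real_of_int (parity_gap (H mu))"
proof -
  let ?M = "2 ^ (R - 1) :: nat" and ?k = "card (H mu)"
  let ?sign = "\<lambda>r. (-1::int) ^ (?k + r - 1) * (if ?M - r \<in> H mu then -1 else 1)"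
  have R: "0 < R" "(2::nat) ^ R = 2 * ?M" using assms(1) by (simp_all flip: power_Suc)
  have H_less: "\<forall>x\<in>H mu. x < ?M" using H_le_sum_list[OF assms(3)] assms(2,4) by fastforce
  have notin: "2 ^ R \<notin> shift (H mu) r" if "r \<le> ?M" for r
    using that H_less R(2) by (auto simp: mem_shift_iff)
  have P2up: "P2up R mu = lam_r R mu ` {1..?M}" unfolding P2up_def by auto
  have "inj_on (lam_r R mu) {1..?M}"
    using card_H_lam_r[OF assms(3) notin] by (intro inj_onI) (metis atLeastAtMost_iff add_left_cancel
        less_le_trans zero_less_one)
  then have "(\<Sum>lam\<in>P2up R mu. real_of_int (Od (num_syt lam)))
      = (\<Sum>r\<in>{1..?M}. real_of_int (Od (num_syt (lam_r R mu r))))"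
    unfolding P2up by (rule sum.reindex[unfolded comp_def])
  also have "\<dots> = real_of_int (Od (num_syt mu)) * real_of_int (\<Sum>r\<in>{1..?M}. ?sign r)"
    using Od_num_syt_lam_r[OF assms(3) _ _ R(1)] assms(2,4,5)
    by (simp add: odd_pos sum_distrib_left mult.assoc)
  also have "(\<Sum>r\<in>{1..?M}. ?sign r) = 2 * (-1) ^ ?k * parity_gap (H mu)"
    using H_less assms(1) by (intro sum_reflected_signs_eq_parity_gap) (auto simp: finite_H)
  finally show ?thesis
    using notin Od_cases[of "num_syt mu"] unfolding S_L_def by auto
qed

end
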